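(* Let $V$ be a real vector space of dimension $m$, $\Gamma$ a finitely generated free abelian dense subgroup of $V$ acting by translations, and $\mathcal C$ a countable $\Gamma$-invariant collection of affine hyperplanes with finitely many $\Gamma$-orbits and normals spanning $V$. Suppose $\mathcal P$ consists of finitely many $\Gamma$-orbits. Then for every choice of $W_1,\dots,W_m\in\mathcal C$ intersecting in a single point and every pair of subsets $A_1,A_2\subset\{1,\dots,m\}$: (i) if $A_1\cap A_2=\emptyset$ then $\mathrm{rk}\,\Gamma^{A_1}+\mathrm{rk}\,\Gamma^{A_2}-\mathrm{rk}\,\Gamma^{A_1\cup A_2}=\mathrm{rk}\,\Gamma$; (ii) if $A_1\cup A_2=\{1,\dots,m\}$ then $\mathrm{rk}\,\Gamma^{A_1}+\mathrm{rk}\,\Gamma^{A_2}=\mathrm{rk}\,\Gamma^{A_1\cap A_2}$.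
   Context: $\mathcal P$ is the set of points of $V$ that are $0$-dimensional intersections of $m$ elements of $\mathcal C$. For $A\subset\{1,\dots,m\}$, $W_A=\bigcap_{i\in A}W_i$ (with $W_\emptyset=V$) and $\Gamma^A\subset\Gamma$ is the stabilizer of $W_A$ under translation. *)

theory Defs
  imports "HOL-Analysis.Analysis"
begin

definition int_indep :: "'a::real_vector set \<Rightarrow> bool" where
  "int_indep S \<longleftrightarrow> finite S \<and>
     (\<forall>c::'a \<Rightarrow> int. (\<Sum>v\<in>S. of_int (c v) *\<^sub>R v) = 0 \<longrightarrow> (\<forall>v\<in>S. c v = 0))"

definition int_span :: "'a::real_vector set \<Rightarrow> 'a set" where
  "int_span S = {(\<Sum>v\<in>S. of_int (c v) *\<^sub>R v) | c :: 'a \<Rightarrow> int. True}"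

definition zrank :: "'a::real_vector set \<Rightarrow> nat" where
  "zrank H = Sup (card ` {S. S \<subseteq> H \<and> int_indep S})"

definition affine_hyperplane :: "'a::euclidean_space set \<Rightarrow> bool" where
  "affine_hyperplane H \<longleftrightarrow> (\<exists>a b. a \<noteq> 0 \<and> H = {x. a \<bullet> x = b})"

definition hyperplane_normals :: "'a::euclidean_space set \<Rightarrow> 'a set" where
  "hyperplane_normals H = {a. a \<noteq> 0 \<and> (\<exists>b. H = {x. a \<bullet> x = b})}"

definition translate :: "'a::real_vector \<Rightarrow> 'a set \<Rightarrow> 'a set" where
  "translate g X = (\<lambda>x. g + x) ` X"

definition points_P :: "nat \<Rightarrow> 'a::real_vector set set \<Rightarrow> 'a set" where
  "points_P m C = {p. \<exists>W :: nat \<Rightarrow> 'a set. (\<forall>i\<in>{1..m}. W i \<in> C) \<and> (\<Inter>i\<in>{1..m}. W i) = {p}}"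

definition W_of :: "(nat \<Rightarrow> 'a set) \<Rightarrow> nat set \<Rightarrow> 'a set" where
  "W_of W A = (\<Inter>i\<in>A. W i)"

definition stab :: "'a::real_vector set \<Rightarrow> 'a set \<Rightarrow> 'a set" where
  "stab \<Gamma> X = {g\<in>\<Gamma>. translate g X = X}"

end

(*
  Write W_i = {x. a_i . x = b_i}. As the W_i meet in a single point, the normals a_i form a
  basis; let e_i be the dual basis. The stabiliser Gamma^A is Gamma intersected with the
  common kernel of the a_i, i in A. Translating W_i by k g (g in Gamma) moves the common
  point of the W_j by k (a_i . g) e_i; since P meets only finitely many Gamma-orbits, two of
  these points differ by an element of Gamma, so (a_i . g) e_i lies in the rational span
  Q Gamma. Hence Q Gamma is the direct sum of its parts on the lines R e_i, and
  rk Gamma^A = dim_Q (Q Gamma^A) is the sum of the ranks r_i of these parts over i not in A.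
  Both identities are then inclusion-exclusion for sums over complements.
*)

theory Submission
  imports Defs
begin

definition scaleQ :: "rat \<Rightarrow> 'a::real_vector \<Rightarrow> 'a" where
  "scaleQ q x = of_rat q *\<^sub>R x"

interpretation Q: vector_space "scaleQ :: rat \<Rightarrow> 'a::real_vector \<Rightarrow> 'a"
  by unfold_locales (auto simp: scaleQ_def scaleR_add_right scaleR_add_left of_rat_add of_rat_mult)

lemma rat_common_denominator:
  fixes u :: "'b \<Rightarrow> rat"
  assumes "finite S"
  obtains d :: nat and c :: "'b \<Rightarrow> int"
  where "d > 0" "\<And>v. v \<in> S \<Longrightarrow> of_nat d * u v = of_int (c v)"
proof -
  define den where "den v = nat (snd (quotient_of (u v)))" for v
  define d where "d = (\<Prod>v\<in>S. den v)"
  have den_pos: "den v > 0" for v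
    using quotient_of_denom_pos' by (simp add: den_def)
  have "of_nat d * u v \<in> \<int>" if v: "v \<in> S" for v
  proof -
    have "of_nat (den v) * u v = of_int (fst (quotient_of (u v)))"
      using quotient_of_div[of "u v"] quotient_of_denom_pos'[of "u v"]
      by (cases "quotient_of (u v)") (simp add: den_def)
    moreover have "d = den v * (\<Prod>w\<in>S - {v}. den w)"
      unfolding d_def using assms v by (rule prod.remove)
    ultimately have "of_nat d * u v = of_int (fst (quotient_of (u v))) * of_nat (\<Prod>w\<in>S - {v}. den w)"
      by (simp add: algebra_simps)
    then show ?thesis
      by (metis Ints_mult Ints_of_int Ints_of_nat)
  qed
  moreover have "d > 0"
    using den_pos assms by (simp add: d_def)
  ultimately show ?thesis
    using that[of d "\<lambda>v. \<lfloor>of_nat d * u v\<rfloor>"] by simp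
qed

lemma int_combination_eq_Q_combination:
  "(\<Sum>v\<in>S. of_int (c v) *\<^sub>R v) = (\<Sum>v\<in>S. scaleQ (of_int (c v)) v)"
  by (simp add: scaleQ_def)

lemma clear_denominators:
  assumes "finite S"
  obtains d :: nat and c :: "'a::real_vector \<Rightarrow> int"
  where "d > 0" "of_nat d *\<^sub>R (\<Sum>v\<in>S. scaleQ (u v) v) = (\<Sum>v\<in>S. of_int (c v) *\<^sub>R v)"
    "\<And>v. v \<in> S \<Longrightarrow> of_nat d * u v = of_int (c v)"
proof -
  obtain d c where d: "d > 0" and c: "\<And>v. v \<in> S \<Longrightarrow> of_nat d * u v = of_int (c v)"
    using rat_common_denominator[OF assms] by metis
  have "of_nat d *\<^sub>R (\<Sum>v\<in>S. scaleQ (u v) v) = (\<Sum>v\<in>S. scaleQ (of_nat d * u v) v)"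
    by (simp add: scaleQ_def scaleR_sum_right of_rat_mult)
  also have "\<dots> = (\<Sum>v\<in>S. of_int (c v) *\<^sub>R v)"
    by (simp add: c int_combination_eq_Q_combination)
  finally show ?thesis
    using that d c by blast
qed

lemma int_indep_iff_Q_independent:
  "int_indep S \<longleftrightarrow> finite S \<and> Q.independent (S :: 'a::real_vector set)"
proof (cases "finite S")
  case True
  show ?thesis
  proof
    assume int_indep: "int_indep S"
    have "u v = 0" if u: "(\<Sum>v\<in>S. scaleQ (u v) v) = 0" and v: "v \<in> S" for u v
    proof -
      obtain d c where "d > 0"
        and dc: "of_nat d *\<^sub>R (\<Sum>v\<in>S. scaleQ (u v) v) = (\<Sum>v\<in>S. of_int (c v) *\<^sub>R v)"
        and cu: "\<And>v. v \<in> S \<Longrightarrow> of_nat d * u v = of_int (c v)"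
        using clear_denominators[OF True, of u] by blast
      have "(\<Sum>v\<in>S. of_int (c v) *\<^sub>R v) = 0"
        using dc u by simp
      then have "c v = 0"
        using int_indep v by (simp add: int_indep_def)
      then show "u v = 0"
        using cu[OF v] \<open>d > 0\<close> by simp
    qed
    then show "finite S \<and> Q.independent S"
      unfolding Q.dependent_finite[OF True] using True by blast
  next
    assume "finite S \<and> Q.independent S"
    then have Q_indep: "u v = 0" if "(\<Sum>v\<in>S. scaleQ (u v) v) = 0" "v \<in> S" for u v
      using that Q.dependent_finite[OF True] by blast
    have "c v = 0" if "(\<Sum>v\<in>S. of_int (c v) *\<^sub>R v) = 0" "v \<in> S" for c v
      using Q_indep[of "\<lambda>v. of_int (c v)"] that by (simp add: int_combination_eq_Q_combination)
    then show "int_indep S"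
      unfolding int_indep_def using True by blast
  qed
qed (simp add: int_indep_def)

lemma zrank_eq_Q_dim:
  assumes "finite F" "H \<subseteq> Q.span F"
  shows "zrank H = Q.dim (H :: 'a::real_vector set)"
proof -
  have finite_indep: "finite S" if "S \<subseteq> H" "Q.independent S" for S
    using Q.independent_span_bound[OF assms(1) that(2)] that(1) assms(2) by blast
  obtain S where S: "S \<subseteq> H" "Q.independent S" "H \<subseteq> Q.span S" "card S = Q.dim H"
    using Q.basis_exists by blast
  show ?thesis
    unfolding zrank_def
  proof (rule cSup_eq_maximum)
    show "Q.dim H \<in> card ` {S. S \<subseteq> H \<and> int_indep S}"
      using S finite_indep by (auto simp: int_indep_iff_Q_independent intro!: image_eqI[of _ _ S])
    show "k \<le> Q.dim H" if "k \<in> card ` {S. S \<subseteq> H \<and> int_indep S}" for k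
      using that Q.independent_span_bound[OF finite_indep[OF S(1,2)]] S
      by (auto simp: int_indep_iff_Q_independent)
  qed
qed

lemma int_span_subset_Q_span: "int_span B \<subseteq> Q.span B"
proof
  fix x assume "x \<in> int_span B"
  then obtain c where "x = (\<Sum>v\<in>B. scaleQ (of_int (c v)) v)"
    by (auto simp: int_span_def int_combination_eq_Q_combination)
  then show "x \<in> Q.span B"
    by (simp add: Q.span_base Q.span_scale Q.span_sum)
qed

lemma scaleR_of_int_in_int_span:
  assumes "x \<in> int_span B"
  shows "of_int k *\<^sub>R x \<in> int_span B"
proof -
  obtain c where "x = (\<Sum>v\<in>B. of_int (c v) *\<^sub>R v)"
    using assms by (auto simp: int_span_def)
  then have "of_int k *\<^sub>R x = (\<Sum>v\<in>B. of_int (k * c v) *\<^sub>R v)"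
    by (simp add: scaleR_sum_right)
  then show ?thesis
    unfolding int_span_def by (intro CollectI exI[of _ "\<lambda>v. k * c v"]) simp
qed

lemma Q_span_multiple_in_int_span:
  assumes "finite B" "x \<in> Q.span B"
  obtains N :: nat where "N > 0" "of_nat N *\<^sub>R x \<in> int_span B"
proof -
  obtain u where x: "x = (\<Sum>v\<in>B. scaleQ (u v) v)"
    using assms(2) unfolding Q.span_finite[OF assms(1)] by blast
  obtain d c where "d > 0" and dx: "of_nat d *\<^sub>R (\<Sum>v\<in>B. scaleQ (u v) v) = (\<Sum>v\<in>B. of_int (c v) *\<^sub>R v)"
    and "\<And>v. v \<in> B \<Longrightarrow> of_nat d * u v = of_int (c v)"
    using clear_denominators[OF assms(1), of u] by blast
  have "of_nat d *\<^sub>R x \<in> int_span B"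
    unfolding int_span_def x dx by (intro CollectI exI[of _ c]) simp
  with \<open>d > 0\<close> show ?thesis
    by (rule that)
qed

context vector_space
begin

context
  fixes I :: "'i set" and S :: "'i \<Rightarrow> 'b set"
  assumes finite_I: "finite I"
    and subspace_S: "\<And>i. i \<in> I \<Longrightarrow> subspace (S i)"
    and direct: "\<And>x j. (\<And>i. i \<in> I \<Longrightarrow> x i \<in> S i) \<Longrightarrow> (\<Sum>i\<in>I. x i) = 0 \<Longrightarrow> j \<in> I \<Longrightarrow> x j = 0"
begin

lemma direct_Int_zero:
  assumes "i \<in> I" "j \<in> I" "i \<noteq> j" "v \<in> S i" "v \<in> S j"
  shows "v = 0"
proof -
  define x where "x k = (if k = i then v else 0) - (if k = j then v else 0)" for k
  have "x k \<in> S k" if "k \<in> I" for k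
    using assms(3-5) subspace_0[OF subspace_S[OF that]] subspace_neg[OF subspace_S[OF that]]
    by (auto simp: x_def)
  moreover have "(\<Sum>k\<in>I. x k) = 0"
    using assms(1,2) by (simp add: x_def sum_subtractf finite_I)
  ultimately have "x i = 0"
    using direct assms(1) by blast
  then show "v = 0"
    using assms(3) by (simp add: x_def)
qed

lemma direct_independent_disjoint:
  assumes "i \<in> I" "j \<in> I" "i \<noteq> j" "C \<subseteq> S i" "D \<subseteq> S j" "independent C"
  shows "C \<inter> D = {}"
  using direct_Int_zero[OF assms(1-3)] assms(4-6) dependent_zero by blast

lemma independent_UN_direct:
  assumes C: "\<And>i. i \<in> I \<Longrightarrow> C i \<subseteq> S i" "\<And>i. i \<in> I \<Longrightarrow> independent (C i)"
    "\<And>i. i \<in> I \<Longrightarrow> finite (C i)"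
  shows "independent (\<Union>i\<in>I. C i)"
proof -
  have "u v = 0" if u: "(\<Sum>v\<in>(\<Union>i\<in>I. C i). scale (u v) v) = 0" and v: "v \<in> (\<Union>i\<in>I. C i)" for u v
  proof -
    have in_S: "(\<Sum>w\<in>C i. scale (u w) w) \<in> S i" if "i \<in> I" for i
      using C(1)[OF that] subspace_scale[OF subspace_S[OF that]]
      by (intro subspace_sum[OF subspace_S[OF that]]) blast
    have "(\<Sum>v\<in>(\<Union>i\<in>I. C i). scale (u v) v) = (\<Sum>i\<in>I. \<Sum>w\<in>C i. scale (u w) w)"
      using C direct_independent_disjoint by (intro sum.UNION_disjoint finite_I) blast+
    with u have sum_zero: "(\<Sum>i\<in>I. \<Sum>w\<in>C i. scale (u w) w) = 0"
      by simp
    have sum_C_zero: "(\<Sum>w\<in>C i. scale (u w) w) = 0" if "i \<in> I" for i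
      using direct[where x="\<lambda>i. \<Sum>w\<in>C i. scale (u w) w", OF in_S sum_zero that] by simp
    obtain i where i: "i \<in> I" "v \<in> C i"
      using v by (rule UN_E)
    then show ?thesis
      using sum_C_zero[OF i(1)] C(2)[OF i(1)] dependent_finite[OF C(3)[OF i(1)]] by blast
  qed
  moreover have "finite (\<Union>i\<in>I. C i)"
    using C(3) finite_I by blast
  ultimately show ?thesis
    using dependent_finite[of "\<Union>i\<in>I. C i"] by blast
qed

lemma dim_span_UN_direct:
  assumes finite_dim: "\<And>i. i \<in> I \<Longrightarrow> \<exists>F. finite F \<and> S i \<subseteq> span F"
  shows "dim (span (\<Union>i\<in>I. S i)) = (\<Sum>i\<in>I. dim (S i))"
proof -
  have "\<forall>i. \<exists>C. C \<subseteq> S i \<and> independent C \<and> S i \<subseteq> span C \<and> card C = dim (S i)"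
    by (meson basis_exists)
  then obtain C where "\<forall>i. C i \<subseteq> S i \<and> independent (C i) \<and> S i \<subseteq> span (C i) \<and> card (C i) = dim (S i)"
    by (rule choice[THEN exE])
  then have C: "\<And>i. C i \<subseteq> S i" "\<And>i. independent (C i)"
      "\<And>i. S i \<subseteq> span (C i)" "\<And>i. card (C i) = dim (S i)"
    by blast+
  have finite_C: "finite (C i)" if "i \<in> I" for i
    using finite_dim[OF that] C(1,2)[of i] independent_span_bound by blast
  have "span (\<Union>i\<in>I. C i) = span (\<Union>i\<in>I. S i)"
    unfolding span_eq using C(1,3) span_superset span_mono[of "C _" "\<Union>i\<in>I. C i"] by blast
  then have "dim (span (\<Union>i\<in>I. S i)) = card (\<Union>i\<in>I. C i)"
    using independent_UN_direct[of C] C(1,2) finite_C by (metis dim_span_eq_card_independent)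
  also have "\<dots> = (\<Sum>i\<in>I. dim (S i))"
    using finite_I finite_C C direct_independent_disjoint by (simp add: card_UN_disjoint)
  finally show ?thesis .
qed

end

end

definition direction :: "('i \<Rightarrow> 'a::real_inner) \<Rightarrow> 'i set \<Rightarrow> 'a set" where
  "direction a A = {x. \<forall>i\<in>A. a i \<bullet> x = 0}"

lemma Q_subspace_direction: "Q.subspace (direction a A)"
  unfolding Q.subspace_def direction_def scaleQ_def by (auto simp: inner_add_right)

locale coordinate_lattice =
  fixes \<Gamma> :: "'a::real_inner set" and B :: "'a set" and I :: "'i set" and a e :: "'i \<Rightarrow> 'a"
  assumes finite_B: "finite B" and lattice_eq: "\<Gamma> = int_span B" and finite_I: "finite I"
    and dual: "\<And>i j. i \<in> I \<Longrightarrow> j \<in> I \<Longrightarrow> a j \<bullet> e i = (if j = i then 1 else 0)"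
    and separating: "\<And>v. \<forall>i\<in>I. a i \<bullet> v = 0 \<Longrightarrow> v = 0"
    and axis_projection_in_Q_span: "\<And>g i. g \<in> \<Gamma> \<Longrightarrow> i \<in> I \<Longrightarrow> (a i \<bullet> g) *\<^sub>R e i \<in> Q.span \<Gamma>"
begin

text \<open>By duality, \<^term>\<open>direction a (I - {i})\<close> is the real line through \<^term>\<open>e i\<close>.\<close>

definition axis :: "'i \<Rightarrow> 'a set" where
  "axis i = Q.span \<Gamma> \<inter> direction a (I - {i})"

lemma Q_span_lattice_subset: "Q.span \<Gamma> \<subseteq> Q.span B"
  using Q.span_minimal[OF _ Q.subspace_span] int_span_subset_Q_span lattice_eq by blast

lemma coordinate_expansion: "x = (\<Sum>i\<in>I. (a i \<bullet> x) *\<^sub>R e i)"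
proof -
  have "a j \<bullet> (x - (\<Sum>i\<in>I. (a i \<bullet> x) *\<^sub>R e i)) = 0" if j: "j \<in> I" for j
  proof -
    have "a j \<bullet> (\<Sum>i\<in>I. (a i \<bullet> x) *\<^sub>R e i) = (\<Sum>i\<in>I. if i = j then a j \<bullet> x else 0)"
      unfolding inner_sum_right by (rule sum.cong) (auto simp: dual j)
    also have "\<dots> = a j \<bullet> x"
      using j finite_I by simp
    finally show ?thesis
      by (simp add: inner_diff_right)
  qed
  then have "x - (\<Sum>i\<in>I. (a i \<bullet> x) *\<^sub>R e i) = 0"
    using separating by blast
  then show ?thesis
    by simp
qed

lemma Q_span_axis_projection:
  assumes "x \<in> Q.span \<Gamma>" "i \<in> I"
  shows "(a i \<bullet> x) *\<^sub>R e i \<in> Q.span \<Gamma>"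
proof -
  let ?S = "{x. (a i \<bullet> x) *\<^sub>R e i \<in> Q.span \<Gamma>}"
  have "0 \<in> ?S"
    by (simp add: Q.span_zero)
  moreover have "x + y \<in> ?S" if "x \<in> ?S" "y \<in> ?S" for x y
    using Q.span_add[OF that[simplified]] by (simp add: scaleR_add_left inner_add_right)
  moreover have "scaleQ c x \<in> ?S" if "x \<in> ?S" for c x
    using Q.span_scale[OF that[simplified], of c] by (simp add: scaleQ_def)
  ultimately have "Q.subspace ?S"
    unfolding Q.subspace_def by blast
  moreover have "\<Gamma> \<subseteq> ?S"
    using axis_projection_in_Q_span assms(2) by blast
  ultimately show ?thesis
    using Q.span_minimal assms(1) by blast
qed

lemma Q_span_Int_direction: "Q.span (\<Gamma> \<inter> direction a A) = Q.span \<Gamma> \<inter> direction a A"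
proof
  have "Q.span (\<Gamma> \<inter> direction a A) \<subseteq> Q.span \<Gamma>"
    by (rule Q.span_mono) blast
  moreover have "Q.span (\<Gamma> \<inter> direction a A) \<subseteq> direction a A"
    by (rule Q.span_minimal[OF _ Q_subspace_direction]) blast
  ultimately show "Q.span (\<Gamma> \<inter> direction a A) \<subseteq> Q.span \<Gamma> \<inter> direction a A"
    by blast
  show "Q.span \<Gamma> \<inter> direction a A \<subseteq> Q.span (\<Gamma> \<inter> direction a A)"
  proof
    fix x assume x: "x \<in> Q.span \<Gamma> \<inter> direction a A"
    then have "x \<in> Q.span B"
      using Q_span_lattice_subset by blast
    then obtain N :: nat where "N > 0" "of_nat N *\<^sub>R x \<in> \<Gamma>"
      using Q_span_multiple_in_int_span[OF finite_B] lattice_eq by blast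
    moreover have "of_nat N *\<^sub>R x \<in> direction a A"
      using x by (simp add: direction_def)
    ultimately have "scaleQ (1 / of_nat N) (of_nat N *\<^sub>R x) \<in> Q.span (\<Gamma> \<inter> direction a A)"
      by (simp add: Q.span_base Q.span_scale)
    moreover have "scaleQ (1 / of_nat N) (of_nat N *\<^sub>R x) = x"
      using \<open>N > 0\<close> by (simp add: scaleQ_def of_rat_divide)
    ultimately show "x \<in> Q.span (\<Gamma> \<inter> direction a A)"
      by simp
  qed
qed

lemma zrank_Int_direction: "zrank (\<Gamma> \<inter> direction a A) = Q.dim (Q.span \<Gamma> \<inter> direction a A)"
proof -
  have "\<Gamma> \<inter> direction a A \<subseteq> Q.span B"
    using Q_span_lattice_subset Q.span_superset by blast
  then have "zrank (\<Gamma> \<inter> direction a A) = Q.dim (\<Gamma> \<inter> direction a A)"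
    by (rule zrank_eq_Q_dim[OF finite_B])
  also have "\<dots> = Q.dim (Q.span \<Gamma> \<inter> direction a A)"
    by (metis Q.dim_span Q_span_Int_direction)
  finally show ?thesis .
qed

lemma axes_direct:
  assumes "J \<subseteq> I" "\<And>i. i \<in> J \<Longrightarrow> x i \<in> axis i" "(\<Sum>i\<in>J. x i) = 0" "j \<in> J"
  shows "x j = 0"
proof (rule separating, intro ballI)
  fix k assume k: "k \<in> I"
  have coordinate_zero: "a k \<bullet> x i = 0" if "i \<in> J" "i \<noteq> k" for i
    using assms(2)[OF that(1)] k that(2) by (auto simp: axis_def direction_def)
  show "a k \<bullet> x j = 0"
  proof (cases "k = j")
    case True
    have "finite J"
      using assms(1) finite_I finite_subset by blast
    have "a k \<bullet> x j = (\<Sum>i\<in>J. a k \<bullet> x i)"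
      using coordinate_zero sum.remove[OF \<open>finite J\<close> assms(4), of "\<lambda>i. a k \<bullet> x i"] True by simp
    also have "\<dots> = 0"
      using assms(3) by (simp flip: inner_sum_right)
    finally show ?thesis .
  next
    case False
    then show ?thesis
      using coordinate_zero assms(4) by blast
  qed
qed

lemma span_axes:
  assumes "A \<subseteq> I"
  shows "Q.span (\<Union>i\<in>I - A. axis i) = Q.span \<Gamma> \<inter> direction a A"
proof
  have "axis i \<subseteq> Q.span \<Gamma> \<inter> direction a A" if "i \<in> I - A" for i
    using that assms by (auto simp: axis_def direction_def)
  then show "Q.span (\<Union>i\<in>I - A. axis i) \<subseteq> Q.span \<Gamma> \<inter> direction a A"
    by (intro Q.span_minimal Q.subspace_inter Q.subspace_span Q_subspace_direction) blast
  show "Q.span \<Gamma> \<inter> direction a A \<subseteq> Q.span (\<Union>i\<in>I - A. axis i)"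
  proof
    fix x assume x: "x \<in> Q.span \<Gamma> \<inter> direction a A"
    have projection_in_axis: "(a i \<bullet> x) *\<^sub>R e i \<in> axis i" if "i \<in> I" for i
      using Q_span_axis_projection[of x i] x that dual[OF that]
      by (auto simp: axis_def direction_def)
    have "x = (\<Sum>i\<in>I. (a i \<bullet> x) *\<^sub>R e i)"
      by (rule coordinate_expansion)
    also have "\<dots> = (\<Sum>i\<in>I - A. (a i \<bullet> x) *\<^sub>R e i)"
      using x finite_I by (intro sum.mono_neutral_right) (auto simp: direction_def)
    also have "\<dots> \<in> Q.span (\<Union>i\<in>I - A. axis i)"
      using projection_in_axis by (intro Q.span_sum Q.span_base) blast
    finally show "x \<in> Q.span (\<Union>i\<in>I - A. axis i)" .
  qed
qed

lemma zrank_Int_direction_eq_sum: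
  assumes "A \<subseteq> I"
  shows "zrank (\<Gamma> \<inter> direction a A) = (\<Sum>i\<in>I - A. zrank (\<Gamma> \<inter> direction a (I - {i})))"
proof -
  have "zrank (\<Gamma> \<inter> direction a A) = Q.dim (Q.span (\<Union>i\<in>I - A. axis i))"
    by (simp add: zrank_Int_direction span_axes[OF assms])
  also have "\<dots> = (\<Sum>i\<in>I - A. Q.dim (axis i))"
  proof (rule Q.dim_span_UN_direct)
    show "finite (I - A)"
      using finite_I by simp
    show "Q.subspace (axis i)" for i
      by (simp add: axis_def Q.subspace_inter Q_subspace_direction)
    show "\<exists>F. finite F \<and> axis i \<subseteq> Q.span F" for i
      using finite_B Q_span_lattice_subset by (auto simp: axis_def)
    show "x j = 0" if "\<And>i. i \<in> I - A \<Longrightarrow> x i \<in> axis i" "(\<Sum>i\<in>I - A. x i) = 0" "j \<in> I - A"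
      for x j
      using axes_direct[of "I - A" x j] that by blast
  qed
  also have "\<dots> = (\<Sum>i\<in>I - A. zrank (\<Gamma> \<inter> direction a (I - {i})))"
    by (simp add: axis_def zrank_Int_direction)
  finally show ?thesis .
qed

end

lemma mem_translate: "y \<in> translate t S \<longleftrightarrow> y - t \<in> S"
  unfolding translate_def by (auto intro!: image_eqI[of _ _ "y - t"])

lemma translate_hyperplane: "translate t {x. c \<bullet> x = d} = {x. c \<bullet> x = d + c \<bullet> t}"
  by (auto simp: mem_translate inner_diff_right)

lemma translate_eq_self_iff_direction:
  assumes "\<forall>i\<in>A. a i \<bullet> p = b i"
  shows "translate g {x. \<forall>i\<in>A. a i \<bullet> x = b i} = {x. \<forall>i\<in>A. a i \<bullet> x = b i} \<longleftrightarrow> g \<in> direction a A"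
    (is "translate g ?X = ?X \<longleftrightarrow> _")
proof
  assume "translate g ?X = ?X"
  moreover have "p + g \<in> translate g ?X"
    using assms by (simp add: mem_translate)
  ultimately have "p + g \<in> ?X"
    by simp
  then show "g \<in> direction a A"
    using assms by (simp add: direction_def inner_add_right)
next
  assume "g \<in> direction a A"
  then show "translate g ?X = ?X"
    by (auto simp: mem_translate direction_def inner_diff_right)
qed

lemma stab_affine_subspace:
  assumes "\<forall>i\<in>A. a i \<bullet> p = b i"
  shows "stab \<Gamma> {x. \<forall>i\<in>A. a i \<bullet> x = b i} = \<Gamma> \<inter> direction a A"
  using translate_eq_self_iff_direction[OF assms] by (auto simp: stab_def)

lemma separating_if_single_point:
  assumes "{x. \<forall>i\<in>I. a i \<bullet> x = b i} = {p}" "\<forall>i\<in>I. a i \<bullet> v = 0"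
  shows "v = 0"
proof -
  have "p \<in> {x. \<forall>i\<in>I. a i \<bullet> x = b i}"
    using assms(1) by blast
  then have "p + v \<in> {x. \<forall>i\<in>I. a i \<bullet> x = b i}"
    using assms(2) by (simp add: inner_add_right)
  then show ?thesis
    using assms(1) by simp
qed

lemma dual_family_exists:
  fixes a :: "'i \<Rightarrow> 'a::euclidean_space"
  assumes "finite I" "card I \<le> DIM('a)" and separating: "\<And>v. \<forall>i\<in>I. a i \<bullet> v = 0 \<Longrightarrow> v = 0"
  obtains e where "\<And>i j. i \<in> I \<Longrightarrow> j \<in> I \<Longrightarrow> a j \<bullet> e i = (if j = i then 1 else 0)"
proof -
  have "\<exists>f. a i \<bullet> f = 1 \<and> (\<forall>j\<in>I - {i}. a j \<bullet> f = 0)" if i: "i \<in> I" for i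
  proof -
    have "dim (a ` (I - {i})) \<le> card (a ` (I - {i}))"
      by (rule dim_le_card') (simp add: assms(1))
    also have "\<dots> \<le> card (I - {i})"
      by (rule card_image_le) (simp add: assms(1))
    also have "\<dots> < card I"
      using assms(1) i by (rule card_Diff1_less)
    also have "\<dots> \<le> DIM('a)"
      by (rule assms(2))
    finally have dim_less: "dim (a ` (I - {i})) < DIM('a)" .
    have "span (a ` (I - {i})) \<noteq> UNIV"
    proof
      assume "span (a ` (I - {i})) = UNIV"
      then have "dim (a ` (I - {i})) = DIM('a)"
        by (metis dim_UNIV dim_span)
      with dim_less show False
        by simp
    qed
    then obtain v where "v \<noteq> 0" and v: "\<forall>x\<in>span (a ` (I - {i})). v \<bullet> x = 0"
      using span_not_UNIV_orthogonal by blast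
    have vj: "\<forall>j\<in>I - {i}. a j \<bullet> v = 0"
      using v by (metis image_eqI inner_commute span_base)
    then have "a i \<bullet> v \<noteq> 0"
      using separating[of v] \<open>v \<noteq> 0\<close> i by blast
    then show ?thesis
      using vj by (intro exI[of _ "(1 / (a i \<bullet> v)) *\<^sub>R v"]) simp
  qed
  then have "\<forall>i\<in>I. \<exists>f. a i \<bullet> f = 1 \<and> (\<forall>j\<in>I - {i}. a j \<bullet> f = 0)"
    by blast
  from bchoice[OF this] obtain e where "\<forall>i\<in>I. a i \<bullet> e i = 1 \<and> (\<forall>j\<in>I - {i}. a j \<bullet> e i = 0)"
    by blast
  then show ?thesis
    by (intro that) auto
qed

lemma W_of_hyperplanes:
  assumes "\<forall>i\<in>I. W i = {x. a i \<bullet> x = b i}" "A \<subseteq> I"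
  shows "W_of W A = {x. \<forall>i\<in>A. a i \<bullet> x = b i}"
  using assms by (auto simp: W_of_def)

lemma hyperplane_equations:
  assumes "\<forall>H\<in>C. affine_hyperplane H" "\<forall>i\<in>I. W i \<in> C"
  obtains a b where "\<forall>i\<in>I. W i = {x. a i \<bullet> x = b i}"
proof -
  have "\<forall>i\<in>I. \<exists>c d. W i = {x. c \<bullet> x = d}"
    using assms unfolding affine_hyperplane_def by blast
  from bchoice[OF this] obtain a where "\<forall>i\<in>I. \<exists>d. W i = {x. a i \<bullet> x = d}"
    by blast
  from bchoice[OF this] obtain b where "\<forall>i\<in>I. W i = {x. a i \<bullet> x = b i}"
    by blast
  then show ?thesis
    using that by blast
qed

lemma shifted_intersection_in_points_P:
  fixes a :: "nat \<Rightarrow> 'a::real_inner"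
  assumes W_eq: "\<And>j. j \<in> {1..m} \<Longrightarrow> W j = {x. a j \<bullet> x = b j}"
    and W_in: "\<And>j. j \<in> {1..m} \<Longrightarrow> W j \<in> C"
    and p_eq: "{x. \<forall>j\<in>{1..m}. a j \<bullet> x = b j} = {p}"
    and i: "i \<in> {1..m}" and shifted_in: "translate t (W i) \<in> C"
    and e: "\<And>j. j \<in> {1..m} \<Longrightarrow> a j \<bullet> e = (if j = i then 1 else 0)"
  shows "p + (a i \<bullet> t) *\<^sub>R e \<in> points_P m C"
proof -
  define q where "q = p + (a i \<bullet> t) *\<^sub>R e"
  define W' where "W' = W(i := translate t (W i))"
  have a_q: "a j \<bullet> q = b j + (if j = i then a i \<bullet> t else 0)" if "j \<in> {1..m}" for j
  proof -
    have "a j \<bullet> p = b j"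
      using p_eq that by blast
    then show ?thesis
      using e[OF that] by (simp add: q_def inner_add_right)
  qed
  have W'_eq: "W' j = {x. a j \<bullet> x = b j + (if j = i then a i \<bullet> t else 0)}" if "j \<in> {1..m}" for j
    using W_eq[OF that] W_eq[OF i] by (simp add: W'_def translate_hyperplane)
  have "(\<Inter>j\<in>{1..m}. W' j) = {q}"
  proof (intro equalityI subsetI)
    fix y assume "y \<in> (\<Inter>j\<in>{1..m}. W' j)"
    then have "\<forall>j\<in>{1..m}. a j \<bullet> (y - q) = 0"
      using W'_eq a_q by (simp add: inner_diff_right)
    then have "y - q = 0"
      by (rule separating_if_single_point[OF p_eq])
    then show "y \<in> {q}"
      by simp
  next
    fix y assume "y \<in> {q}"
    then show "y \<in> (\<Inter>j\<in>{1..m}. W' j)"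
      using W'_eq a_q by simp
  qed
  moreover have "\<forall>j\<in>{1..m}. W' j \<in> C"
    using W_in shifted_in by (simp add: W'_def)
  ultimately show ?thesis
    unfolding points_P_def q_def by blast
qed

lemma finite_orbits_pigeonhole:
  fixes f :: "nat \<Rightarrow> 'a::ab_group_add"
  assumes "finite ((\<lambda>p. (\<lambda>g. g + p) ` \<Gamma>) ` P)" "0 \<in> \<Gamma>" "range f \<subseteq> P"
  obtains k l where "k \<noteq> l" "f k - f l \<in> \<Gamma>"
proof -
  let ?orbit = "\<lambda>p. (\<lambda>g. g + p) ` \<Gamma>"
  have "finite (range (?orbit \<circ> f))"
    using assms(1,3) by (metis finite_subset image_comp image_mono)
  then have "\<not> inj (?orbit \<circ> f)"
    using finite_imageD infinite_UNIV_nat by blast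
  then obtain k l where "k \<noteq> l" "?orbit (f k) = ?orbit (f l)"
    unfolding inj_def by auto
  moreover have "f k \<in> ?orbit (f k)"
    using assms(2) by force
  ultimately obtain g where "g \<in> \<Gamma>" "f k = g + f l"
    by auto
  then show ?thesis
    using that[OF \<open>k \<noteq> l\<close>] by simp
qed

lemma axis_projection_in_Q_span_of_finite_orbits:
  assumes \<Gamma>_int: "\<And>g k. g \<in> \<Gamma> \<Longrightarrow> of_int k *\<^sub>R g \<in> \<Gamma>"
    and C_inv: "\<forall>g\<in>\<Gamma>. \<forall>H\<in>C. translate g H \<in> C"
    and P_orbits: "finite ((\<lambda>p. (\<lambda>g. g + p) ` \<Gamma>) ` points_P m C)"
    and W_eq: "\<And>j. j \<in> {1..m} \<Longrightarrow> W j = {x. a j \<bullet> x = b j}"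
    and W_in: "\<And>j. j \<in> {1..m} \<Longrightarrow> W j \<in> C"
    and p_eq: "{x. \<forall>j\<in>{1..m}. a j \<bullet> x = b j} = {p}"
    and i: "i \<in> {1..m}"
    and e: "\<And>j. j \<in> {1..m} \<Longrightarrow> a j \<bullet> e = (if j = i then 1 else 0)"
    and g: "g \<in> \<Gamma>"
  shows "(a i \<bullet> g) *\<^sub>R e \<in> Q.span \<Gamma>"
proof -
  define f where "f k = p + (a i \<bullet> (of_nat k *\<^sub>R g)) *\<^sub>R e" for k :: nat
  have f_in: "f k \<in> points_P m C" for k
  proof -
    have "of_nat k *\<^sub>R g \<in> \<Gamma>"
      using \<Gamma>_int[OF g, of "int k"] by simp
    then have "translate (of_nat k *\<^sub>R g) (W i) \<in> C"
      using C_inv W_in[OF i] by blast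
    from W_eq W_in p_eq i this e show ?thesis
      unfolding f_def by (rule shifted_intersection_in_points_P)
  qed
  moreover have "0 \<in> \<Gamma>"
    using \<Gamma>_int[OF g, of 0] by simp
  moreover have "range f \<subseteq> points_P m C"
    using f_in by blast
  ultimately obtain k l where "k \<noteq> l" "f k - f l \<in> \<Gamma>"
    using finite_orbits_pigeonhole[OF P_orbits] by blast
  moreover have "f k - f l = (real k - real l) *\<^sub>R ((a i \<bullet> g) *\<^sub>R e)"
    by (simp add: f_def scaleR_diff_left left_diff_distrib)
  ultimately have "scaleQ (1 / (of_nat k - of_nat l)) ((real k - real l) *\<^sub>R ((a i \<bullet> g) *\<^sub>R e)) \<in> Q.span \<Gamma>"
    by (simp add: Q.span_base Q.span_scale)
  moreover have "scaleQ (1 / (of_nat k - of_nat l)) ((real k - real l) *\<^sub>R ((a i \<bullet> g) *\<^sub>R e)) = (a i \<bullet> g) *\<^sub>R e"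
    using \<open>k \<noteq> l\<close> by (simp add: scaleQ_def of_rat_divide of_rat_diff)
  ultimately show ?thesis
    by simp
qed

lemma zrank_stab_additive:
  fixes \<Gamma> :: "'a::euclidean_space set" and W :: "nat \<Rightarrow> 'a set"
  assumes dim: "DIM('a) = m"
    and free_fg: "\<exists>B. int_indep B \<and> \<Gamma> = int_span B"
    and C_hyp: "\<forall>H\<in>C. affine_hyperplane H"
    and C_inv: "\<forall>g\<in>\<Gamma>. \<forall>H\<in>C. translate g H \<in> C"
    and P_orbits: "finite ((\<lambda>p. (\<lambda>g. g + p) ` \<Gamma>) ` points_P m C)"
    and W_in: "\<forall>i\<in>{1..m}. W i \<in> C"
    and W_point: "\<exists>p. W_of W {1..m} = {p}"
  obtains r where "\<And>A. A \<subseteq> {1..m} \<Longrightarrow> zrank (stab \<Gamma> (W_of W A)) = (\<Sum>i\<in>{1..m} - A. r i)"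
proof -
  obtain B where B: "int_indep B" "\<Gamma> = int_span B"
    using free_fg by blast
  obtain a b where W_eq: "\<forall>i\<in>{1..m}. W i = {x. a i \<bullet> x = b i}"
    using hyperplane_equations[OF C_hyp W_in] by blast
  obtain p where p_eq: "{x. \<forall>i\<in>{1..m}. a i \<bullet> x = b i} = {p}"
    using W_point unfolding W_of_hyperplanes[OF W_eq order_refl] by blast
  obtain e where dual: "\<And>i j. i \<in> {1..m} \<Longrightarrow> j \<in> {1..m} \<Longrightarrow> a j \<bullet> e i = (if j = i then 1 else 0)"
    using dual_family_exists[of "{1..m}" a] separating_if_single_point[OF p_eq] dim by auto
  interpret coordinate_lattice \<Gamma> B "{1..m}" a e
  proof
    show "(a i \<bullet> g) *\<^sub>R e i \<in> Q.span \<Gamma>" if "g \<in> \<Gamma>" "i \<in> {1..m}" for g i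
    proof -
      have \<Gamma>_int: "\<And>g k. g \<in> \<Gamma> \<Longrightarrow> of_int k *\<^sub>R g \<in> \<Gamma>"
        using B(2) scaleR_of_int_in_int_span by blast
      have W_in': "\<And>j. j \<in> {1..m} \<Longrightarrow> W j \<in> C"
        using W_in by blast
      from \<Gamma>_int C_inv P_orbits W_eq[rule_format] W_in' p_eq that(2) dual[OF that(2)] that(1)
      show ?thesis
        by (rule axis_projection_in_Q_span_of_finite_orbits)
    qed
  qed (use B separating_if_single_point[OF p_eq] dual in \<open>auto simp: int_indep_def\<close>)
  have "zrank (stab \<Gamma> (W_of W A)) = (\<Sum>i\<in>{1..m} - A. zrank (\<Gamma> \<inter> direction a ({1..m} - {i})))"
    if "A \<subseteq> {1..m}" for A
  proof -
    have "\<forall>i\<in>A. a i \<bullet> p = b i"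
      using p_eq that by blast
    then have "stab \<Gamma> (W_of W A) = \<Gamma> \<inter> direction a A"
      unfolding W_of_hyperplanes[OF W_eq that] by (rule stab_affine_subspace)
    then show ?thesis
      using zrank_Int_direction_eq_sum[OF that] by simp
  qed
  then show ?thesis
    by (rule that)
qed

lemma sum_complements_Int_Un:
  assumes "finite I"
  shows "sum f (I - A1) + sum f (I - A2) = sum f (I - (A1 \<inter> A2)) + sum f (I - (A1 \<union> A2))"
  using sum.union_inter[of "I - A1" "I - A2" f] assms by (simp add: Diff_Int Diff_Un)

lemma rank_identities_of_complement_sums:
  fixes R :: "'i set \<Rightarrow> nat"
  assumes "finite I" and R: "\<And>A. A \<subseteq> I \<Longrightarrow> R A = (\<Sum>i\<in>I - A. r i)" and "A1 \<subseteq> I" "A2 \<subseteq> I"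
  shows "(A1 \<inter> A2 = {} \<longrightarrow> int (R A1) + int (R A2) - int (R (A1 \<union> A2)) = int (R {}))
    \<and> (A1 \<union> A2 = I \<longrightarrow> R A1 + R A2 = R (A1 \<inter> A2))"
proof -
  have "A1 \<inter> A2 \<subseteq> I" "A1 \<union> A2 \<subseteq> I"
    using assms(3,4) by blast+
  then have modular: "R A1 + R A2 = R (A1 \<inter> A2) + R (A1 \<union> A2)"
    using sum_complements_Int_Un[OF assms(1)] R assms(3,4) by simp
  show ?thesis
  proof (intro conjI impI)
    assume "A1 \<inter> A2 = {}"
    with modular show "int (R A1) + int (R A2) - int (R (A1 \<union> A2)) = int (R {})"
      by simp
  next
    assume "A1 \<union> A2 = I"
    then have "R (A1 \<union> A2) = 0"
      using R by simp
    with modular show "R A1 + R A2 = R (A1 \<inter> A2)"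
      by simp
  qed
qed

theorem mainTheorem8:
  fixes \<Gamma> :: "'a::euclidean_space set"
    and C :: "'a set set"
    and m :: nat
    and W :: "nat \<Rightarrow> 'a set"
    and A1 A2 :: "nat set"
  assumes dim: "DIM('a) = m"
    and free_fg: "\<exists>B. int_indep B \<and> \<Gamma> = int_span B"
    and dense: "closure \<Gamma> = UNIV"
    and C_countable: "countable C"
    and C_hyp: "\<forall>H\<in>C. affine_hyperplane H"
    and C_inv: "\<forall>g\<in>\<Gamma>. \<forall>H\<in>C. translate g H \<in> C"
    and C_orbits: "finite ((\<lambda>H. (\<lambda>g. translate g H) ` \<Gamma>) ` C)"
    and C_normals: "span (\<Union>H\<in>C. hyperplane_normals H) = UNIV"
    and P_orbits: "finite ((\<lambda>p. (\<lambda>g. g + p) ` \<Gamma>) ` points_P m C)"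
    and W_in: "\<forall>i\<in>{1..m}. W i \<in> C"
    and W_point: "\<exists>p. W_of W {1..m} = {p}"
    and A1: "A1 \<subseteq> {1..m}" and A2: "A2 \<subseteq> {1..m}"
  shows "(A1 \<inter> A2 = {} \<longrightarrow>
            int (zrank (stab \<Gamma> (W_of W A1))) + int (zrank (stab \<Gamma> (W_of W A2)))
              - int (zrank (stab \<Gamma> (W_of W (A1 \<union> A2)))) = int (zrank \<Gamma>))
       \<and> (A1 \<union> A2 = {1..m} \<longrightarrow>
            zrank (stab \<Gamma> (W_of W A1)) + zrank (stab \<Gamma> (W_of W A2))
              = zrank (stab \<Gamma> (W_of W (A1 \<inter> A2))))"
proof -
  obtain r where rank: "\<And>A. A \<subseteq> {1..m} \<Longrightarrow> zrank (stab \<Gamma> (W_of W A)) = (\<Sum>i\<in>{1..m} - A. r i)"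
    using zrank_stab_additive[OF dim free_fg C_hyp C_inv P_orbits W_in W_point] by blast
  have "stab \<Gamma> (W_of W {}) = \<Gamma>"
    by (auto simp: stab_def W_of_def set_eq_iff mem_translate)
  with rank_identities_of_complement_sums[of "{1..m}" "\<lambda>A. zrank (stab \<Gamma> (W_of W A))" r, OF _ rank A1 A2]
  show ?thesis
    by simp
qed

end
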